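(* Let $q$ be a prime power and let $X$ be a polarity graph of the projective plane $PG(2,q)$ having $a$ absolute points (loops retained). Then every independent set $S$ of $X$ satisfies \[ |S|\le \frac{\sqrt q+\sqrt{q+4a\frac{q+\sqrt q+1}{q^2+q+1}}}{2\,\frac{q+\sqrt q+1}{q^2+q+1}}. \]
   Context: A polarity of $PG(2,q)$ is an incidence-preserving bijection $\sigma$ mapping points to lines and lines to points with $\sigma^2$ the identity (equivalently, an automorphism of order two of the point–line incidence graph of $PG(2,q)$ interchanging points and lines). The polarity graph $X$ has the $q^2+q+1$ points as vertices, with $x$ adjacent to $y$ iff $x$ is incident with the line $\sigma(y)$; a point $x$ with $x$ incident with $\sigma(x)$ is absolute and carries a loop. An independent set is a set of vertices no two distinct members of which are adjacent (absolute points may belong to it). *)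

theory Defs
  imports Complex_Main
begin

text \<open>The Desarguesian projective plane PG(2,q) over a finite field 'a with q = CARD('a). A line is represented, as usual, by its dual coordinates, i.e. again a
  1-dimensional subspace (the normal direction); point p lies on line l iff the standard
  bilinear form vanishes on p x l.\<close>

type_synonym 'a vec3 = "'a \<times> 'a \<times> 'a"

fun dot3 :: "'a::comm_ring_1 vec3 \<Rightarrow> 'a vec3 \<Rightarrow> 'a" where
  "dot3 (a, b, c) (d, e, f) = a * d + b * e + c * f"

fun smult3 :: "'a::comm_ring_1 \<Rightarrow> 'a vec3 \<Rightarrow> 'a vec3" where
  "smult3 k (a, b, c) = (k * a, k * b, k * c)"

definition span1 :: "'a::comm_ring_1 vec3 \<Rightarrow> 'a vec3 set" where
  "span1 v = {smult3 k v | k. True}"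

definition pg_points :: "('a::{field,finite} vec3 set) set" where
  "pg_points = {span1 v | v. v \<noteq> (0, 0, 0)}"

definition pg_lines :: "('a::{field,finite} vec3 set) set" where
  "pg_lines = {span1 v | v. v \<noteq> (0, 0, 0)}"

definition pg_incident :: "'a::{field,finite} vec3 set \<Rightarrow> 'a vec3 set \<Rightarrow> bool" where
  "pg_incident p l \<longleftrightarrow> (\<forall>x\<in>p. \<forall>y\<in>l. dot3 x y = 0)"

definition is_polarity :: "('a::{field,finite} vec3 set \<Rightarrow> 'a vec3 set) \<Rightarrow> bool" where
  "is_polarity \<sigma> \<longleftrightarrow>
     (\<forall>p\<in>pg_points. \<sigma> p \<in> pg_lines \<and> \<sigma> (\<sigma> p) = p) \<and>
     (\<forall>l\<in>pg_lines. \<sigma> l \<in> pg_points \<and> \<sigma> (\<sigma> l) = l) \<and>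
     (\<forall>p\<in>pg_points. \<forall>l\<in>pg_lines. pg_incident p l \<longleftrightarrow> pg_incident (\<sigma> l) (\<sigma> p))"

definition polarity_adj :: "('a::{field,finite} vec3 set \<Rightarrow> 'a vec3 set) \<Rightarrow> 'a vec3 set \<Rightarrow> 'a vec3 set \<Rightarrow> bool" where
  "polarity_adj \<sigma> x y \<longleftrightarrow> pg_incident x (\<sigma> y)"

definition absolute_points :: "('a::{field,finite} vec3 set \<Rightarrow> 'a vec3 set) \<Rightarrow> 'a vec3 set set" where
  "absolute_points \<sigma> = {x \<in> pg_points. polarity_adj \<sigma> x x}"

definition polarity_independent :: "('a::{field,finite} vec3 set \<Rightarrow> 'a vec3 set) \<Rightarrow> 'a vec3 set set \<Rightarrow> bool" where
  "polarity_independent \<sigma> S \<longleftrightarrow> S \<subseteq> pg_points \<and>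
     (\<forall>x\<in>S. \<forall>y\<in>S. x \<noteq> y \<longrightarrow> \<not> polarity_adj \<sigma> x y)"

end

(*
  For a point p let d(p) be the number of points of S on the line \<sigma>(p). Since \<sigma> is a bijection
  from points to lines, every point lies on q + 1 of the lines \<sigma>(p) and any two points on exactly
  one, so the sum of d over all n = q^2 + q + 1 points is (q + 1) s and the sum of d^2 is q s + s^2,
  where s = |S|. As S is independent, the sum of d over p in S only counts absolute points of S,
  so it is at most a. Cauchy-Schwarz for the centred vectors 1_S and d then gives
  (q + 1) s^2 / n - a \<le> sqrt q (s - s^2 / n), i.e. c s^2 \<le> sqrt q s + a with
  c = (q + sqrt q + 1) / n, and solving this quadratic inequality for s gives the bound.
*)
theory Submission
  imports Defs "HOL-Library.Cardinality" "HOL-Analysis.Convex"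
begin

lemma covariance_Cauchy_Schwarz:
  fixes f g :: "'a \<Rightarrow> real" and P :: "'a set"
  defines "n \<equiv> real (card P)"
  shows "((\<Sum>p\<in>P. f p * g p) - (\<Sum>p\<in>P. f p) * (\<Sum>p\<in>P. g p) / n)\<^sup>2
    \<le> ((\<Sum>p\<in>P. (f p)\<^sup>2) - (\<Sum>p\<in>P. f p)\<^sup>2 / n) * ((\<Sum>p\<in>P. (g p)\<^sup>2) - (\<Sum>p\<in>P. g p)\<^sup>2 / n)"
proof (cases "card P = 0")
  case True
  then have "P = {} \<or> infinite P" by auto
  then show ?thesis by auto
next
  case False
  have expand: "(\<Sum>p\<in>P. (h p - x) * (k p - y))
      = (\<Sum>p\<in>P. h p * k p) - y * (\<Sum>p\<in>P. h p) - x * (\<Sum>p\<in>P. k p) + n * x * y"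
    for h k :: "'a \<Rightarrow> real" and x y
    by (simp add: n_def algebra_simps sum.distrib sum_subtractf sum_distrib_left sum_distrib_right)
  have centered: "(\<Sum>p\<in>P. (h p - (\<Sum>x\<in>P. h x) / n) * (k p - (\<Sum>x\<in>P. k x) / n))
      = (\<Sum>p\<in>P. h p * k p) - (\<Sum>p\<in>P. h p) * (\<Sum>p\<in>P. k p) / n" for h k :: "'a \<Rightarrow> real"
    unfolding expand using False by (simp add: n_def field_simps)
  show ?thesis
    using Cauchy_Schwarz_ineq_sum[of "\<lambda>p. f p - (\<Sum>x\<in>P. f x) / n" "\<lambda>p. g p - (\<Sum>x\<in>P. g x) / n" P]
    unfolding power2_eq_square centered .
qed

lemma quadratic_upper_bound:
  fixes a b c s :: real
  assumes "c > 0" and "c * s\<^sup>2 \<le> b * s + a"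
  shows "s \<le> (b + sqrt (b\<^sup>2 + 4 * a * c)) / (2 * c)"
proof -
  have "(2 * c * s - b)\<^sup>2 = 4 * c * (c * s\<^sup>2 - b * s) + b\<^sup>2"
    by (simp add: algebra_simps power2_eq_square)
  also have "\<dots> \<le> 4 * c * a + b\<^sup>2"
    using assms by (simp add: mult_left_mono)
  finally have "2 * c * s - b \<le> sqrt (b\<^sup>2 + 4 * a * c)"
    by (intro real_le_rsqrt) (simp add: algebra_simps)
  with \<open>c > 0\<close> show ?thesis
    by (simp add: le_divide_eq algebra_simps)
qed

lemma card_filter_eq_sum_of_bool:
  "finite A \<Longrightarrow> card {x \<in> A. Q x} = (\<Sum>x\<in>A. of_bool (Q x))"
  by (simp add: Int_def)

lemma sum_card_incident_swap:
  assumes "finite P" and "finite S"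
  shows "(\<Sum>p\<in>P. card {y \<in> S. I y p}) = (\<Sum>y\<in>S. card {p \<in> P. I y p})"
proof -
  have "(\<Sum>p\<in>P. card {y \<in> S. I y p}) = (\<Sum>p\<in>P. \<Sum>y\<in>S. of_bool (I y p))"
    by (simp only: card_filter_eq_sum_of_bool[OF assms(2)])
  also have "\<dots> = (\<Sum>y\<in>S. \<Sum>p\<in>P. of_bool (I y p))"
    by (rule sum.swap)
  also have "\<dots> = (\<Sum>y\<in>S. card {p \<in> P. I y p})"
    by (simp only: card_filter_eq_sum_of_bool[OF assms(1)])
  finally show ?thesis .
qed

lemma sum_card_incident_squared:
  assumes "finite P" and "finite S"
  shows "(\<Sum>p\<in>P. (card {y \<in> S. I y p})\<^sup>2) = (\<Sum>y\<in>S. \<Sum>z\<in>S. card {p \<in> P. I y p \<and> I z p})"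
proof -
  have "(\<Sum>p\<in>P. (card {y \<in> S. I y p})\<^sup>2) = (\<Sum>p\<in>P. \<Sum>y\<in>S. \<Sum>z\<in>S. of_bool (I y p \<and> I z p))"
    by (simp only: power2_eq_square card_filter_eq_sum_of_bool[OF assms(2)] sum_product of_bool_conj)
  also have "\<dots> = (\<Sum>y\<in>S. \<Sum>p\<in>P. \<Sum>z\<in>S. of_bool (I y p \<and> I z p))"
    by (rule sum.swap)
  also have "\<dots> = (\<Sum>y\<in>S. \<Sum>z\<in>S. \<Sum>p\<in>P. of_bool (I y p \<and> I z p))"
    by (rule sum.cong[OF refl], rule sum.swap)
  also have "\<dots> = (\<Sum>y\<in>S. \<Sum>z\<in>S. card {p \<in> P. I y p \<and> I z p})"
    by (simp only: card_filter_eq_sum_of_bool[OF assms(1)])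
  finally show ?thesis .
qed

lemma sum_card_incident_eq:
  assumes "finite P" and "S \<subseteq> P"
    and deg: "\<And>y. y \<in> P \<Longrightarrow> card {p \<in> P. I y p} = r"
  shows "(\<Sum>p\<in>P. card {y \<in> S. I y p}) = r * card S"
proof -
  have "(\<Sum>p\<in>P. card {y \<in> S. I y p}) = (\<Sum>y\<in>S. card {p \<in> P. I y p})"
    using assms(1,2) by (intro sum_card_incident_swap) (auto intro: finite_subset)
  also have "\<dots> = (\<Sum>y\<in>S. r)"
    using assms(2) deg by (intro sum.cong) auto
  finally show ?thesis
    by simp
qed

lemma sum_square_card_incident_eq:
  assumes "finite P" and "S \<subseteq> P"
    and deg: "\<And>y. y \<in> P \<Longrightarrow> card {p \<in> P. I y p} = r"
    and codeg: "\<And>y z. y \<in> P \<Longrightarrow> z \<in> P \<Longrightarrow> y \<noteq> z \<Longrightarrow> card {p \<in> P. I y p \<and> I z p} = \<mu>"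
  shows "(\<Sum>p\<in>P. (card {y \<in> S. I y p})\<^sup>2) = card S * (r + \<mu> * (card S - 1))"
proof -
  have finS: "finite S"
    using assms(1,2) by (rule finite_subset[rotated])
  have row: "(\<Sum>z\<in>S. card {p \<in> P. I y p \<and> I z p}) = r + \<mu> * (card S - 1)" if "y \<in> S" for y
  proof -
    have "(\<Sum>z\<in>S. card {p \<in> P. I y p \<and> I z p})
        = card {p \<in> P. I y p \<and> I y p} + (\<Sum>z\<in>S - {y}. card {p \<in> P. I y p \<and> I z p})"
      using finS that by (rule sum.remove)
    also have "\<dots> = r + (\<Sum>z\<in>S - {y}. \<mu>)"
      using that assms(2) by (intro arg_cong2[where f = "(+)"] sum.cong) (auto intro!: deg codeg)
    finally show ?thesis
      using finS that by simp
  qed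
  have "(\<Sum>p\<in>P. (card {y \<in> S. I y p})\<^sup>2) = (\<Sum>y\<in>S. \<Sum>z\<in>S. card {p \<in> P. I y p \<and> I z p})"
    using assms(1) finS by (rule sum_card_incident_squared)
  also have "\<dots> = card S * (r + \<mu> * (card S - 1))"
    using row by simp
  finally show ?thesis .
qed

text \<open>Cauchy--Schwarz for the centred indicator of S against the centred number of points of S
  incident with each block. The condition \<mu> (n - 1) = r (r - 1) makes the variance of the second
  exactly r - \<mu> times that of the first.\<close>
lemma sum_card_incident_lower_bound:
  fixes I :: "'p \<Rightarrow> 'p \<Rightarrow> bool" and P S :: "'p set" and r \<mu> :: nat
  assumes "finite P" and "S \<subseteq> P"
    and deg: "\<And>y. y \<in> P \<Longrightarrow> card {p \<in> P. I y p} = r"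
    and codeg: "\<And>y z. y \<in> P \<Longrightarrow> z \<in> P \<Longrightarrow> y \<noteq> z \<Longrightarrow> card {p \<in> P. I y p \<and> I z p} = \<mu>"
    and design: "\<mu> * (card P - 1) = r * (r - 1)"
    and "\<mu> \<le> r"
  shows "(real r + sqrt (real (r - \<mu>))) / real (card P) * (real (card S))\<^sup>2
    \<le> sqrt (real (r - \<mu>)) * real (card S) + real (\<Sum>p\<in>S. card {y \<in> S. I y p})"
proof (cases "S = {}")
  case True
  then show ?thesis
    by simp
next
  case False
  define n where "n = real (card P)"
  define s where "s = real (card S)"
  define t where "t = real (r - \<mu>)"
  define e where "e = real (\<Sum>p\<in>S. card {y \<in> S. I y p})"
  define d where "d p = real (card {y \<in> S. I y p})" for p
  define f where "f p = (of_bool (p \<in> S) :: real)" for p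
  have "card S \<le> card P"
    using assms(1,2) by (rule card_mono)
  moreover have "card S > 0"
    using False assms(1,2) by (simp add: card_gt_0_iff finite_subset)
  ultimately have s_le_n: "s \<le> n" and s_pos: "s > 0" and n_pos: "n > 0"
    by (simp_all add: s_def n_def)
  have sum_f: "(\<Sum>p\<in>P. f p) = s"
    using assms(1,2) by (simp add: f_def s_def Int_absorb1)
  moreover have "(f p)\<^sup>2 = f p" for p
    by (simp add: f_def)
  ultimately have sum_ff: "(\<Sum>p\<in>P. (f p)\<^sup>2) = s"
    by simp
  have sum_fd: "(\<Sum>p\<in>P. f p * d p) = e"
    using assms(1,2) by (simp add: f_def d_def e_def Int_absorb1)
  have sum_d: "(\<Sum>p\<in>P. d p) = r * s"
    using sum_card_incident_eq[OF assms(1,2) deg, THEN arg_cong[where f = real]]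
    by (simp add: d_def s_def)
  have "(\<Sum>p\<in>P. (card {y \<in> S. I y p})\<^sup>2) = card S * (r + \<mu> * (card S - 1))"
    using assms(1,2) deg codeg by (rule sum_square_card_incident_eq)
  then have "real (\<Sum>p\<in>P. (card {y \<in> S. I y p})\<^sup>2) = real (card S * (r + \<mu> * (card S - 1)))"
    by (rule arg_cong)
  then have sum_dd: "(\<Sum>p\<in>P. (d p)\<^sup>2) = s * (r + \<mu> * (s - 1))"
    using \<open>card S > 0\<close> by (simp add: d_def s_def of_nat_diff)
  have design_real: "real \<mu> * (n - 1) = real r * (real r - 1)"
    using arg_cong[OF design, of real] \<open>card S \<le> card P\<close> \<open>card S > 0\<close>
    by (cases r) (simp_all add: n_def of_nat_diff algebra_simps)
  define Y where "Y = s - s\<^sup>2 / n"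
  have Y_nonneg: "Y \<ge> 0"
    using s_le_n s_pos n_pos by (simp add: Y_def power2_eq_square divide_le_eq mult_right_mono)
  have var_d: "(\<Sum>p\<in>P. (d p)\<^sup>2) - (\<Sum>p\<in>P. d p)\<^sup>2 / n = t * Y"
  proof -
    have "(\<Sum>p\<in>P. (d p)\<^sup>2) - (\<Sum>p\<in>P. d p)\<^sup>2 / n - t * Y
        = s\<^sup>2 / n * (real \<mu> * (n - 1) - real r * (real r - 1))"
      unfolding sum_dd sum_d Y_def t_def
      using n_pos \<open>\<mu> \<le> r\<close> by (simp add: of_nat_diff field_simps power2_eq_square)
    then show ?thesis
      by (simp add: design_real)
  qed
  have "(e - s * (\<Sum>p\<in>P. d p) / n)\<^sup>2 \<le> Y * (t * Y)"
    using covariance_Cauchy_Schwarz[of f d P]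
    unfolding n_def[symmetric] sum_f sum_ff sum_fd var_d Y_def .
  then have "(r * s\<^sup>2 / n - e)\<^sup>2 \<le> (sqrt t * Y)\<^sup>2"
    by (simp add: sum_d t_def power_mult_distrib power2_eq_square algebra_simps)
  then have "r * s\<^sup>2 / n - e \<le> sqrt t * Y"
    by (rule power2_le_imp_le) (simp add: t_def Y_nonneg)
  moreover have "(r + sqrt t) / n * s\<^sup>2 = (r * s\<^sup>2 / n - e) + sqrt t * s - sqrt t * Y + e"
    by (simp add: Y_def algebra_simps add_divide_distrib)
  ultimately have "(r + sqrt t) / n * s\<^sup>2 \<le> sqrt t * s + e"
    by linarith
  then show ?thesis
    by (simp only: n_def s_def t_def e_def)
qed

lemma dot3_commute: "dot3 u v = dot3 v u"
  by (cases u; cases v) (simp add: algebra_simps)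

lemma dot3_smult3_left [simp]: "dot3 (smult3 k u) v = k * dot3 u v"
  by (cases u; cases v) (simp add: algebra_simps)

lemma dot3_smult3_right [simp]: "dot3 u (smult3 k v) = k * dot3 u v"
  by (cases u; cases v) (simp add: algebra_simps)

lemma dot3_zero_left [simp]: "dot3 (0, 0, 0) v = 0"
  by (cases v) simp

lemma smult3_one [simp]: "smult3 1 v = v"
  by (cases v) simp

lemma smult3_zero_left [simp]: "smult3 0 v = (0, 0, 0)"
  by (cases v) simp

lemma smult3_smult3 [simp]: "smult3 k (smult3 k' v) = smult3 (k * k') v"
  by (cases v) (simp add: algebra_simps)

lemma smult3_eq_zero_iff [simp]:
  "smult3 k (v :: 'a::field vec3) = (0, 0, 0) \<longleftrightarrow> k = 0 \<or> v = (0, 0, 0)"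
  by (cases v) auto

lemma smult3_right_cancel:
  fixes v :: "'a::field vec3"
  assumes "v \<noteq> (0, 0, 0)"
  shows "smult3 k v = smult3 k' v \<longleftrightarrow> k = k'"
  using assms by (cases v) auto

lemma smult3_in_span1 [simp]: "smult3 k v \<in> span1 v"
  unfolding span1_def by blast

lemma self_in_span1 [simp]: "v \<in> span1 v"
  using smult3_in_span1[of 1 v] by simp

lemma span1_eq_span1:
  fixes v :: "'a::field vec3"
  assumes "x \<in> span1 v" and "x \<noteq> (0, 0, 0)"
  shows "span1 x = span1 v"
proof -
  obtain k where x: "x = smult3 k v" and "k \<noteq> 0"
    using assms unfolding span1_def by auto
  then have "smult3 k' v = smult3 (k' / k) x" for k'
    by simp
  then have "span1 v \<subseteq> span1 x"
    unfolding span1_def by blast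
  moreover have "span1 x \<subseteq> span1 v"
    unfolding span1_def x by auto
  ultimately show ?thesis
    by blast
qed

lemma span1_eq_range: "span1 v = range (\<lambda>k. smult3 k v)"
  unfolding span1_def by blast

lemma span1_in_pg_points: "v \<noteq> (0, 0, 0) \<Longrightarrow> span1 v \<in> pg_points"
  unfolding pg_points_def by blast

lemma pg_pointsE:
  assumes "p \<in> pg_points"
  obtains v where "p = span1 v" and "v \<noteq> (0, 0, 0)"
  using assms unfolding pg_points_def by blast

lemma pg_lines_eq_pg_points: "pg_lines = pg_points"
  unfolding pg_lines_def pg_points_def ..

lemma pg_incident_span1_iff: "pg_incident (span1 u) (span1 w) \<longleftrightarrow> dot3 u w = 0"
proof
  show "pg_incident (span1 u) (span1 w) \<Longrightarrow> dot3 u w = 0"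
    unfolding pg_incident_def by simp
  show "dot3 u w = 0 \<Longrightarrow> pg_incident (span1 u) (span1 w)"
    unfolding pg_incident_def span1_def by (auto simp del: dot3.simps smult3.simps)
qed

lemma pg_incident_commute:
  assumes "p \<in> pg_points" and "l \<in> pg_points"
  shows "pg_incident p l \<longleftrightarrow> pg_incident l p"
  using assms by (elim pg_pointsE) (simp add: pg_incident_span1_iff dot3_commute)

lemma card_span1_minus_zero:
  fixes v :: "'a::{field,finite} vec3"
  assumes "v \<noteq> (0, 0, 0)"
  shows "card (span1 v - {(0, 0, 0)}) = CARD('a) - 1"
proof -
  have inj: "inj (\<lambda>k. smult3 k v)"
    by (rule injI) (simp add: smult3_right_cancel[OF assms])
  have "span1 v - {(0, 0, 0)} = (\<lambda>k. smult3 k v) ` (UNIV - {0})"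
    unfolding span1_eq_range image_set_diff[OF inj] by simp
  then show ?thesis
    using inj by (simp add: card_image inj_on_subset card_Diff_singleton)
qed

lemma pg_points_disjoint:
  fixes p p' :: "'a::{field,finite} vec3 set"
  assumes "p \<in> pg_points" and "p' \<in> pg_points" and "p \<noteq> p'"
  shows "(p - {(0, 0, 0)}) \<inter> (p' - {(0, 0, 0)}) = {}"
proof -
  have "r = span1 x" if "r \<in> pg_points" and "x \<in> r" and "x \<noteq> (0, 0, 0)"
    for r :: "'a vec3 set" and x
    using that by (auto elim!: pg_pointsE simp: span1_eq_span1)
  with assms show ?thesis
    by blast
qed

lemma card_scaling_closed_minus_zero:
  fixes V :: "'a::{field,finite} vec3 set"
  assumes "\<And>x k. x \<in> V \<Longrightarrow> smult3 k x \<in> V"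
  shows "card (V - {(0, 0, 0)}) = card {p \<in> pg_points. p \<subseteq> V} * (CARD('a) - 1)"
proof -
  let ?Q = "{p \<in> pg_points. p \<subseteq> V}"
  have "V - {(0, 0, 0)} = (\<Union>p\<in>?Q. p - {(0, 0, 0)})"
  proof
    show "V - {(0, 0, 0)} \<subseteq> (\<Union>p\<in>?Q. p - {(0, 0, 0)})"
    proof
      fix x assume x: "x \<in> V - {(0, 0, 0)}"
      then have "span1 x \<in> pg_points"
        by (simp add: span1_in_pg_points)
      moreover have "span1 x \<subseteq> V"
      proof
        fix y assume "y \<in> span1 x"
        then obtain k where "y = smult3 k x"
          unfolding span1_def by blast
        then show "y \<in> V"
          using assms x by simp
      qed
      ultimately have "span1 x \<in> ?Q"
        by blast
      moreover have "x \<in> span1 x - {(0, 0, 0)}"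
        using x by simp
      ultimately show "x \<in> (\<Union>p\<in>?Q. p - {(0, 0, 0)})"
        by blast
    qed
    show "(\<Union>p\<in>?Q. p - {(0, 0, 0)}) \<subseteq> V - {(0, 0, 0)}"
      by blast
  qed
  also have "card \<dots> = (\<Sum>p\<in>?Q. card (p - {(0, 0, 0)}))"
  proof (rule card_UN_disjoint)
    show "\<forall>p\<in>?Q. \<forall>p'\<in>?Q. p \<noteq> p' \<longrightarrow> (p - {(0, 0, 0)}) \<inter> (p' - {(0, 0, 0)}) = {}"
      by (intro ballI impI pg_points_disjoint) auto
  qed simp_all
  also have "\<dots> = (\<Sum>p\<in>?Q. CARD('a) - 1)"
  proof (rule sum.cong[OF refl])
    fix p assume "p \<in> ?Q"
    then have "p \<in> pg_points"
      by simp
    then obtain v where "p = span1 v" and "v \<noteq> (0, 0, 0)"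
      by (rule pg_pointsE)
    then show "card (p - {(0, 0, 0)}) = CARD('a) - 1"
      by (simp add: card_span1_minus_zero)
  qed
  finally show ?thesis
    by simp
qed

lemma CARD_ge_two: "CARD('a::{field,finite}) \<ge> 2"
proof -
  have "card {0 :: 'a, 1} \<le> CARD('a)"
    by (rule card_mono) simp_all
  then show ?thesis
    by simp
qed

lemma mult_CARD_minus_one_cancel:
  "m * (CARD('a::{field,finite}) - 1) = n * (CARD('a) - 1) \<Longrightarrow> m = n"
  using CARD_ge_two[where 'a='a] by simp

lemma card_pg_points:
  "card (pg_points :: 'a::{field,finite} vec3 set set) = CARD('a)\<^sup>2 + CARD('a) + 1"
proof (rule mult_CARD_minus_one_cancel[where 'a='a])
  have "card (pg_points :: 'a vec3 set set) * (CARD('a) - 1) = card (UNIV - {(0 :: 'a, 0 :: 'a, 0 :: 'a)})"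
    using card_scaling_closed_minus_zero[of "UNIV :: 'a vec3 set"] by simp
  also have "\<dots> = CARD('a) ^ 3 - 1"
    by (simp add: card_Diff_singleton power3_eq_cube)
  also have "\<dots> = (CARD('a)\<^sup>2 + CARD('a) + 1) * (CARD('a) - 1)"
    by (cases "CARD('a)") (simp_all add: algebra_simps power2_eq_square power3_eq_cube)
  finally show "card (pg_points :: 'a vec3 set set) * (CARD('a) - 1)
      = (CARD('a)\<^sup>2 + CARD('a) + 1) * (CARD('a) - 1)" .
qed

fun add3 :: "'a::comm_ring_1 vec3 \<Rightarrow> 'a vec3 \<Rightarrow> 'a vec3" where
  "add3 (a, b, c) (d, e, f) = (a + d, b + e, c + f)"

lemma dot3_add3_left: "dot3 (add3 x y) w = dot3 x w + dot3 y w"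
  by (cases x; cases y; cases w) (simp add: algebra_simps)

lemma exists_dot3_eq_one:
  fixes w :: "'a::field vec3"
  assumes "w \<noteq> (0, 0, 0)"
  shows "\<exists>e. dot3 e w = 1"
proof -
  obtain a b c where w: "w = (a, b, c)"
    by (cases w)
  consider "a \<noteq> 0" | "b \<noteq> 0" | "c \<noteq> 0"
    using assms w by auto
  then show ?thesis
  proof cases
    case 1
    then show ?thesis by (intro exI[of _ "(inverse a, 0, 0)"]) (simp add: w)
  next
    case 2
    then show ?thesis by (intro exI[of _ "(0, inverse b, 0)"]) (simp add: w)
  next
    case 3
    then show ?thesis by (intro exI[of _ "(0, 0, inverse c)"]) (simp add: w)
  qed
qed

lemma card_dot3_kernel:
  fixes w :: "'a::{field,finite} vec3"
  assumes "w \<noteq> (0, 0, 0)"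
  shows "card {x. dot3 x w = 0} = CARD('a)\<^sup>2"
proof -
  obtain e where e: "dot3 e w = 1"
    using exists_dot3_eq_one[OF assms] by blast
  define F where "F t = {x. dot3 x w = t}" for t
  define k where "k = card (F 0)"
  \<comment> \<open>the level sets are translates of each other along e\<close>
  have card_F: "card (F t) = k" for t
  proof -
    let ?shift = "\<lambda>x. add3 x (smult3 t e)"
    have "bij_betw ?shift (F 0) (F t)"
    proof (rule bij_betw_byWitness[where f' = "\<lambda>x. add3 x (smult3 (- t) e)"])
      have "add3 (add3 x (smult3 s e)) (smult3 (- s) e) = x" for x s
        by (cases x; cases e) simp
      then show "\<forall>x\<in>F 0. add3 (?shift x) (smult3 (- t) e) = x"
        and "\<forall>x\<in>F t. ?shift (add3 x (smult3 (- t) e)) = x"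
        by (metis minus_minus)+
      have "dot3 (add3 x (smult3 s e)) w = dot3 x w + s" for x s
        using e by (simp add: dot3_add3_left del: dot3.simps)
      then show "?shift ` F 0 \<subseteq> F t" and "(\<lambda>x. add3 x (smult3 (- t) e)) ` F t \<subseteq> F 0"
        by (auto simp: F_def intro!: image_subsetI)
    qed
    then show ?thesis
      by (simp add: bij_betw_same_card k_def)
  qed
  have "(\<Union>t. F t) = UNIV"
    unfolding F_def by blast
  then have "CARD('a) ^ 3 = card (\<Union>t. F t)"
    by (simp add: power3_eq_cube)
  also have "\<dots> = (\<Sum>t\<in>UNIV. card (F t))"
    by (rule card_UN_disjoint) (simp_all add: F_def disjoint_iff)
  also have "\<dots> = CARD('a) * k"
    by (simp add: card_F)
  finally have "CARD('a) * CARD('a)\<^sup>2 = CARD('a) * k"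
    by (simp add: power2_eq_square power3_eq_cube)
  then show ?thesis
    using CARD_ge_two[where 'a='a] by (simp add: k_def F_def)
qed

lemma span1_subset_dot3_kernel: "span1 u \<subseteq> {x. dot3 x w = 0} \<longleftrightarrow> dot3 u w = 0"
proof
  show "span1 u \<subseteq> {x. dot3 x w = 0} \<Longrightarrow> dot3 u w = 0"
    using self_in_span1[of u] by blast
  show "dot3 u w = 0 \<Longrightarrow> span1 u \<subseteq> {x. dot3 x w = 0}"
    unfolding span1_eq_range by (auto simp del: dot3.simps)
qed

lemma card_pg_points_on_line:
  fixes l :: "'a::{field,finite} vec3 set"
  assumes "l \<in> pg_lines"
  shows "card {p \<in> pg_points. pg_incident p l} = CARD('a) + 1"
proof (rule mult_CARD_minus_one_cancel[where 'a='a])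
  obtain w where l: "l = span1 w" and w: "w \<noteq> (0, 0, 0)"
    using assms unfolding pg_lines_eq_pg_points by (rule pg_pointsE)
  let ?V = "{x. dot3 x w = 0}"
  have "p \<subseteq> ?V \<longleftrightarrow> pg_incident p l" if "p \<in> pg_points" for p
    using that by (elim pg_pointsE) (simp add: l pg_incident_span1_iff span1_subset_dot3_kernel)
  then have "{p \<in> pg_points. p \<subseteq> ?V} = {p \<in> pg_points. pg_incident p l}"
    by blast
  then have "card {p \<in> pg_points. pg_incident p l} * (CARD('a) - 1) = card (?V - {(0, 0, 0)})"
    using card_scaling_closed_minus_zero[of ?V] by (simp del: dot3.simps smult3.simps)
  also have "\<dots> = CARD('a)\<^sup>2 - 1"
    by (simp add: card_Diff_singleton card_dot3_kernel[OF w])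
  also have "\<dots> = (CARD('a) + 1) * (CARD('a) - 1)"
    by (cases "CARD('a)") (simp_all add: algebra_simps power2_eq_square)
  finally show "card {p \<in> pg_points. pg_incident p l} * (CARD('a) - 1)
      = (CARD('a) + 1) * (CARD('a) - 1)" .
qed

lemma card_pg_lines_through_point:
  fixes p :: "'a::{field,finite} vec3 set"
  assumes "p \<in> pg_points"
  shows "card {l \<in> pg_lines. pg_incident p l} = CARD('a) + 1"
proof -
  have "{l \<in> pg_lines. pg_incident p l} = {l \<in> pg_points. pg_incident l p}"
    using assms pg_incident_commute unfolding pg_lines_eq_pg_points by blast
  with assms show ?thesis
    using card_pg_points_on_line[of p] by (simp add: pg_lines_eq_pg_points)
qed

fun cross3 :: "'a::comm_ring_1 vec3 \<Rightarrow> 'a vec3 \<Rightarrow> 'a vec3" where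
  "cross3 (a, b, c) (d, e, f) = (b * f - c * e, c * d - a * f, a * e - b * d)"

lemma dot3_cross3_left: "dot3 u (cross3 u v) = 0"
  by (cases u; cases v) (simp add: algebra_simps)

lemma dot3_cross3_right: "dot3 v (cross3 u v) = 0"
  by (cases u; cases v) (simp add: algebra_simps)

lemma cross3_anticommute: "cross3 v u = smult3 (- 1) (cross3 u v)"
  by (cases u; cases v) (simp add: algebra_simps)

lemma cross3_cross3: "cross3 w (cross3 u v) = add3 (smult3 (dot3 v w) u) (smult3 (- dot3 u w) v)"
  by (cases u; cases v; cases w) (simp add: algebra_simps)

lemma cross3_eq_zero_imp_in_span1:
  fixes x c :: "'a::field vec3"
  assumes "c \<noteq> (0, 0, 0)" and "cross3 x c = (0, 0, 0)"
  shows "x \<in> span1 c"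
proof -
  obtain c1 c2 c3 where c: "c = (c1, c2, c3)"
    by (cases c)
  obtain x1 x2 x3 where x: "x = (x1, x2, x3)"
    by (cases x)
  have eqs: "x2 * c3 = x3 * c2" "x3 * c1 = x1 * c3" "x1 * c2 = x2 * c1"
    using assms(2) by (simp_all add: c x)
  consider "c1 \<noteq> 0" | "c2 \<noteq> 0" | "c3 \<noteq> 0"
    using assms(1) c by auto
  then have "\<exists>k. x = smult3 k c"
  proof cases
    case 1
    with eqs show ?thesis by (intro exI[of _ "x1 / c1"]) (simp add: c x field_simps)
  next
    case 2
    with eqs show ?thesis by (intro exI[of _ "x2 / c2"]) (simp add: c x field_simps)
  next
    case 3
    with eqs show ?thesis by (intro exI[of _ "x3 / c3"]) (simp add: c x field_simps)
  qed
  then show ?thesis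
    unfolding span1_def by blast
qed

text \<open>The line through span1 u and span1 u' is span1 (u \<times> u').\<close>
lemma card_pg_lines_through_two_points:
  fixes p p' :: "'a::{field,finite} vec3 set"
  assumes "p \<in> pg_points" and "p' \<in> pg_points" and "p \<noteq> p'"
  shows "card {l \<in> pg_lines. pg_incident p l \<and> pg_incident p' l} = 1"
proof -
  obtain u where p: "p = span1 u" and u: "u \<noteq> (0, 0, 0)"
    using assms(1) by (rule pg_pointsE)
  obtain u' where p': "p' = span1 u'" and u': "u' \<noteq> (0, 0, 0)"
    using assms(2) by (rule pg_pointsE)
  let ?c = "cross3 u u'"
  have c: "?c \<noteq> (0, 0, 0)"
  proof
    assume "?c = (0, 0, 0)"
    then have "cross3 u' u = (0, 0, 0)"
      by (simp add: cross3_anticommute[of u'] del: cross3.simps)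
    then have "u' \<in> span1 u"
      by (rule cross3_eq_zero_imp_in_span1[OF u])
    with u' p p' assms(3) show False
      by (simp add: span1_eq_span1)
  qed
  have "{l \<in> pg_lines. pg_incident p l \<and> pg_incident p' l} = {span1 ?c}"
  proof (intro equalityI subsetI)
    fix l assume "l \<in> {l \<in> pg_lines. pg_incident p l \<and> pg_incident p' l}"
    then have "l \<in> pg_points" and inc: "pg_incident p l" "pg_incident p' l"
      by (simp_all add: pg_lines_eq_pg_points)
    then obtain w where l: "l = span1 w" and w: "w \<noteq> (0, 0, 0)"
      by (elim pg_pointsE)
    have "dot3 u w = 0" and "dot3 u' w = 0"
      using inc by (simp_all add: p p' l pg_incident_span1_iff)
    then have "cross3 w ?c = (0, 0, 0)"
      by (simp add: cross3_cross3 del: cross3.simps)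
    then have "w \<in> span1 ?c"
      by (rule cross3_eq_zero_imp_in_span1[OF c])
    with w show "l \<in> {span1 ?c}"
      by (simp add: l span1_eq_span1)
  next
    fix l assume "l \<in> {span1 ?c}"
    then show "l \<in> {l \<in> pg_lines. pg_incident p l \<and> pg_incident p' l}"
      using c by (simp add: p p' pg_lines_eq_pg_points span1_in_pg_points pg_incident_span1_iff
          dot3_cross3_left dot3_cross3_right del: cross3.simps)
  qed
  then show ?thesis
    by simp
qed

lemma is_polarity_imp_bij_betw:
  "is_polarity \<sigma> \<Longrightarrow> bij_betw \<sigma> pg_points pg_lines"
  unfolding is_polarity_def by (intro bij_betw_byWitness[where f' = \<sigma>]) auto

lemma card_polarity_neighbours:
  fixes \<sigma> :: "'a::{field,finite} vec3 set \<Rightarrow> 'a vec3 set"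
  assumes "bij_betw \<sigma> pg_points pg_lines" and "y \<in> pg_points"
  shows "card {p \<in> pg_points. polarity_adj \<sigma> y p} = CARD('a) + 1"
proof -
  have "card {p \<in> pg_points. polarity_adj \<sigma> y p} = card {l \<in> pg_lines. pg_incident y l}"
    unfolding polarity_adj_def by (rule bij_betw_same_card[OF bij_betw_Collect[OF assms(1)]]) simp
  with assms(2) show ?thesis
    by (simp add: card_pg_lines_through_point)
qed

lemma card_polarity_common_neighbours:
  fixes \<sigma> :: "'a::{field,finite} vec3 set \<Rightarrow> 'a vec3 set"
  assumes "bij_betw \<sigma> pg_points pg_lines"
    and "y \<in> pg_points" and "z \<in> pg_points" and "y \<noteq> z"
  shows "card {p \<in> pg_points. polarity_adj \<sigma> y p \<and> polarity_adj \<sigma> z p} = 1"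
proof -
  have "card {p \<in> pg_points. polarity_adj \<sigma> y p \<and> polarity_adj \<sigma> z p}
      = card {l \<in> pg_lines. pg_incident y l \<and> pg_incident z l}"
    unfolding polarity_adj_def by (rule bij_betw_same_card[OF bij_betw_Collect[OF assms(1)]]) simp
  with assms(2-) show ?thesis
    by (simp add: card_pg_lines_through_two_points)
qed

text \<open>Within an independent set the only adjacencies are the loops at absolute points.\<close>
lemma sum_card_polarity_adj_le_absolute:
  fixes \<sigma> :: "'a::{field,finite} vec3 set \<Rightarrow> 'a vec3 set"
  assumes "polarity_independent \<sigma> S"
  shows "(\<Sum>p\<in>S. card {y \<in> S. polarity_adj \<sigma> y p}) \<le> card (absolute_points \<sigma>)"
proof -
  have S: "S \<subseteq> pg_points" and indep: "\<And>x y. x \<in> S \<Longrightarrow> y \<in> S \<Longrightarrow> x \<noteq> y \<Longrightarrow> \<not> polarity_adj \<sigma> x y"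
    using assms unfolding polarity_independent_def by blast+
  have "{y \<in> S. polarity_adj \<sigma> y p} = (if p \<in> absolute_points \<sigma> then {p} else {})" if "p \<in> S" for p
    using that S indep unfolding absolute_points_def by auto
  then have "(\<Sum>p\<in>S. card {y \<in> S. polarity_adj \<sigma> y p}) = (\<Sum>p\<in>S. of_bool (p \<in> absolute_points \<sigma>))"
    by (intro sum.cong) simp_all
  also have "\<dots> = card (S \<inter> absolute_points \<sigma>)"
    by (simp add: Int_def)
  also have "\<dots> \<le> card (absolute_points \<sigma>)"
    by (intro card_mono) simp_all
  finally show ?thesis .
qed

theorem mainTheorem9:
  fixes \<sigma> :: "'a::{field,finite} vec3 set \<Rightarrow> 'a vec3 set"
    and S :: "'a vec3 set set"
  assumes "is_polarity \<sigma>"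
    and "polarity_independent \<sigma> S"
  shows "let q = real (card (UNIV :: 'a set)); a = real (card (absolute_points \<sigma>)) in
    real (card S) \<le>
    (sqrt q + sqrt (q + 4 * a * ((q + sqrt q + 1) / (q\<^sup>2 + q + 1))))
      / (2 * ((q + sqrt q + 1) / (q\<^sup>2 + q + 1)))"
proof -
  define q where "q = real CARD('a)"
  define a where "a = real (card (absolute_points \<sigma>))"
  define c where "c = (q + sqrt q + 1) / (q\<^sup>2 + q + 1)"
  define e where "e = (\<Sum>p\<in>S. card {y \<in> S. polarity_adj \<sigma> y p})"
  have bij: "bij_betw \<sigma> pg_points pg_lines"
    using assms(1) by (rule is_polarity_imp_bij_betw)
  have S: "S \<subseteq> pg_points"
    using assms(2) unfolding polarity_independent_def by blast
  have "(real (CARD('a) + 1) + sqrt (real (CARD('a) + 1 - 1))) / real (card (pg_points :: 'a vec3 set set))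
      * (real (card S))\<^sup>2 \<le> sqrt (real (CARD('a) + 1 - 1)) * real (card S) + real e"
    unfolding e_def using S
    by (intro sum_card_incident_lower_bound[where \<mu> = 1])
      (simp_all add: card_polarity_neighbours[OF bij] card_polarity_common_neighbours[OF bij]
        card_pg_points power2_eq_square)
  moreover have "real e \<le> a"
    unfolding e_def a_def of_nat_le_iff by (rule sum_card_polarity_adj_le_absolute[OF assms(2)])
  ultimately have "c * (real (card S))\<^sup>2 \<le> sqrt q * real (card S) + a"
    by (simp add: c_def q_def card_pg_points add_ac)
  then have "real (card S) \<le> (sqrt q + sqrt ((sqrt q)\<^sup>2 + 4 * a * c)) / (2 * c)"
    by (intro quadratic_upper_bound) (simp_all add: c_def q_def add_pos_nonneg)
  then show ?thesis
    by (simp add: Let_def q_def a_def c_def)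
qed

end
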